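(* Let $\mathcal U$ be a $k$-universe with $\bigcup\mathcal U\subseteq\Lambda$, $\mu$ a one-wise independent distribution on $\mathbb Z_N^k$, and $M\in\mathcal M_{\mathcal U,m}$ with $m\le|\mathcal U|$. For every $f:\mathrm{Map}(M,\mathbb Z_N^k)\to\mathbb C$ and every $b\in\mathbb Z_N^\Lambda$: if $b=[\mathbf a]$ for some $\mathbf a\in\mathcal X(M)$ then $|\langle\boldsymbol R^{\Lambda,M}_\mu[f],\chi_b\rangle|\le|\widehat f(\mathbf a)|$; and if $b\neq[\mathbf a]$ for all $\mathbf a\in\mathcal X(M)$ then $\langle\boldsymbol R^{\Lambda,M}_\mu[f],\chi_b\rangle=0$.
   Context: $N\ge2$, $\mathbb Z_N=\mathbb Z/N\mathbb Z$. A $k$-universe $\mathcal U=(U_1,\dots,U_k)$ is a tuple of finite sets of common size $|\mathcal U|$; $\mathcal M_{\mathcal U,m}$ is the set of $m$-element sets of pairwise vertex-disjoint tuples in $U_1\times\dots\times U_k$. $\mu$ one-wise independent means each coordinate marginal of $\mu$ is uniform; $\mu(\cdot)$ is its pmf. For $e=(v_1,\dots,v_k)$, $x_{|e}=(x_{v_1},\dots,x_{v_k})$. $\boldsymbol R^{\Lambda,M}_\mu[f](x)=\sum_{\xi:M\to\mathbb Z_N^k}\big(\prod_{e\in M}\mu(x_{|e}-\xi(e))\big)f(\xi)$. Inner products are $\langle g,h\rangle=\mathbb E_x[g(x)\overline{h(x)}]$ with $x$ uniform; $\chi_b(x)=\exp(\frac{2\pi\mathrm i}{N}\sum_{v\in\Lambda}b_vx_v)$.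 For $\mathbf a:M\to\mathbb Z_N^k$, $\psi_{\mathbf a}(\xi)=\prod_{e\in M}\chi_{\mathbf a(e)}(\xi(e))$ (with $\chi_t(w)=\exp(\frac{2\pi\mathrm i}{N}\sum_i t_iw_i)$ on $\mathbb Z_N^k$) and $\widehat f(\mathbf a)=\langle f,\psi_{\mathbf a}\rangle$ (expectation over uniform $\xi$). $\mathcal X(M)$ is the set of $\mathbf a:M\to\mathbb Z_N^k$ such that $\mathbf a(e)$ does not have exactly one nonzero coordinate, for every $e\in M$. For $\mathbf a:M\to\mathbb Z_N^k$, $[\mathbf a]\in\mathbb Z_N^\Lambda$ is defined by $[\mathbf a]_{v_i}=\mathbf a(e)_i$ for every $e=(v_1,\dots,v_k)\in M$ and $i\in[k]$, and $[\mathbf a]_v=0$ for vertices $v$ not covered by $M$. *)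

theory Defs
  imports Complex_Main "HOL-Library.FuncSet"
begin

(* Z_N is represented by the naturals below N; Z_N^I by extensional functions I <rightarrow><^sub>E {..<N}.
  A k-tuple is an extensional function {..<k} <rightarrow> vertices. *)

definition ZN_pow :: "nat \<Rightarrow> 'i set \<Rightarrow> ('i \<Rightarrow> nat) set" where
  "ZN_pow N I = I \<rightarrow>\<^sub>E {..<N}"

definition vsub :: "nat \<Rightarrow> nat \<Rightarrow> (nat \<Rightarrow> nat) \<Rightarrow> (nat \<Rightarrow> nat) \<Rightarrow> (nat \<Rightarrow> nat)" where
  "vsub N k w z = (\<lambda>i\<in>{..<k}. (w i + N - z i) mod N)"

definition k_universe :: "nat \<Rightarrow> (nat \<Rightarrow> 'v set) \<Rightarrow> nat \<Rightarrow> bool" where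
  "k_universe k U n \<longleftrightarrow> (\<forall>i<k. finite (U i) \<and> card (U i) = n)"

definition matchings :: "nat \<Rightarrow> (nat \<Rightarrow> 'v set) \<Rightarrow> nat \<Rightarrow> (nat \<Rightarrow> 'v) set set" where
  "matchings k U m = {M. M \<subseteq> Pi\<^sub>E {..<k} U \<and> finite M \<and> card M = m \<and>
      (\<forall>e\<in>M. inj_on e {..<k}) \<and>
      (\<forall>e\<in>M. \<forall>e'\<in>M. e \<noteq> e' \<longrightarrow> e ` {..<k} \<inter> e' ` {..<k} = {})}"

definition pmf_on :: "nat \<Rightarrow> nat \<Rightarrow> ((nat \<Rightarrow> nat) \<Rightarrow> real) \<Rightarrow> bool" where
  "pmf_on N k \<mu> \<longleftrightarrow> (\<forall>w\<in>ZN_pow N {..<k}. \<mu> w \<ge> 0) \<and> (\<Sum>w\<in>ZN_pow N {..<k}. \<mu> w) = 1"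

definition one_wise_independent :: "nat \<Rightarrow> nat \<Rightarrow> ((nat \<Rightarrow> nat) \<Rightarrow> real) \<Rightarrow> bool" where
  "one_wise_independent N k \<mu> \<longleftrightarrow>
     (\<forall>i<k. \<forall>t<N. (\<Sum>w\<in>{w\<in>ZN_pow N {..<k}. w i = t}. \<mu> w) = 1 / real N)"

definition chr :: "nat \<Rightarrow> 'i set \<Rightarrow> ('i \<Rightarrow> nat) \<Rightarrow> ('i \<Rightarrow> nat) \<Rightarrow> complex" where
  "chr N I t w = exp (2 * of_real pi * \<i> * of_nat (\<Sum>j\<in>I. t j * w j) / of_nat N)"

definition inner_exp :: "'a set \<Rightarrow> ('a \<Rightarrow> complex) \<Rightarrow> ('a \<Rightarrow> complex) \<Rightarrow> complex" where
  "inner_exp A g h = (\<Sum>x\<in>A. g x * cnj (h x)) / of_nat (card A)"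

definition maps :: "nat \<Rightarrow> nat \<Rightarrow> (nat \<Rightarrow> 'v) set \<Rightarrow> ((nat \<Rightarrow> 'v) \<Rightarrow> (nat \<Rightarrow> nat)) set" where
  "maps N k M = Pi\<^sub>E M (\<lambda>_. ZN_pow N {..<k})"

definition restr_tuple :: "nat \<Rightarrow> ('v \<Rightarrow> nat) \<Rightarrow> (nat \<Rightarrow> 'v) \<Rightarrow> (nat \<Rightarrow> nat)" where
  "restr_tuple k x e = (\<lambda>i\<in>{..<k}. x (e i))"

definition Rop :: "nat \<Rightarrow> nat \<Rightarrow> ((nat \<Rightarrow> nat) \<Rightarrow> real) \<Rightarrow> (nat \<Rightarrow> 'v) set
     \<Rightarrow> (((nat \<Rightarrow> 'v) \<Rightarrow> (nat \<Rightarrow> nat)) \<Rightarrow> complex) \<Rightarrow> ('v \<Rightarrow> nat) \<Rightarrow> complex" where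
  "Rop N k \<mu> M f x = (\<Sum>\<xi>\<in>maps N k M.
      of_real (\<Prod>e\<in>M. \<mu> (vsub N k (restr_tuple k x e) (\<xi> e))) * f \<xi>)"

definition psi :: "nat \<Rightarrow> nat \<Rightarrow> (nat \<Rightarrow> 'v) set \<Rightarrow> ((nat \<Rightarrow> 'v) \<Rightarrow> (nat \<Rightarrow> nat))
     \<Rightarrow> ((nat \<Rightarrow> 'v) \<Rightarrow> (nat \<Rightarrow> nat)) \<Rightarrow> complex" where
  "psi N k M a \<xi> = (\<Prod>e\<in>M. chr N {..<k} (a e) (\<xi> e))"

definition fourier :: "nat \<Rightarrow> nat \<Rightarrow> (nat \<Rightarrow> 'v) set
     \<Rightarrow> (((nat \<Rightarrow> 'v) \<Rightarrow> (nat \<Rightarrow> nat)) \<Rightarrow> complex) \<Rightarrow> ((nat \<Rightarrow> 'v) \<Rightarrow> (nat \<Rightarrow> nat)) \<Rightarrow> complex" where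
  "fourier N k M f a = inner_exp (maps N k M) f (psi N k M a)"

definition Xset :: "nat \<Rightarrow> nat \<Rightarrow> (nat \<Rightarrow> 'v) set \<Rightarrow> ((nat \<Rightarrow> 'v) \<Rightarrow> (nat \<Rightarrow> nat)) set" where
  "Xset N k M = {a\<in>maps N k M. \<forall>e\<in>M. card {i\<in>{..<k}. a e i \<noteq> 0} \<noteq> 1}"

definition bracket :: "nat \<Rightarrow> 'v set \<Rightarrow> (nat \<Rightarrow> 'v) set \<Rightarrow> ((nat \<Rightarrow> 'v) \<Rightarrow> (nat \<Rightarrow> nat)) \<Rightarrow> ('v \<Rightarrow> nat)" where
  "bracket k \<Lambda> M a = (\<lambda>v\<in>\<Lambda>. if \<exists>e\<in>M. \<exists>i<k. e i = v
       then (THE c. \<exists>e\<in>M. \<exists>i<k. e i = v \<and> a e i = c) else 0)"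

end

theory Submission
  imports Defs
begin

(* Unfold the inner product and swap the two sums.  For fixed xi the sum over x in Z_N^Lambda
   factorizes along the coordinates x |-> ((x restricted to e)_{e in M}, x restricted to W), where W is
   the set of vertices not covered by M: each edge contributes a translated Fourier sum of mu, equal to
   conj chi_{b|e}(xi e) * muhat(b|e), and each uncovered vertex v a character sum, equal to N [b v = 0].
   Hence <R f, chi_b> = [b vanishes on W] * prod_e muhat(b|e) * fhat(beta) with beta e = b|e.
   If b = [a] for some a in X(M), then beta = a and |muhat| <= 1.  Otherwise either b does not vanish
   on W, or beta is not in X(M), so some b|e has exactly one nonzero coordinate and one-wise
   independence forces muhat(b|e) = 0. *)

definition unity_root :: "nat \<Rightarrow> nat \<Rightarrow> complex" where
  "unity_root N n = cis (2 * pi * real n / real N)"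

lemma unity_root_add: "unity_root N (a + b) = unity_root N a * unity_root N b"
  unfolding unity_root_def by (simp add: cis_mult add_divide_distrib distrib_left)

lemma unity_root_0 [simp]: "unity_root N 0 = 1"
  by (simp add: unity_root_def)

lemma unity_root_sum: "unity_root N (\<Sum>i\<in>I. h i) = (\<Prod>i\<in>I. unity_root N (h i))"
  by (induction I rule: infinite_finite_induct) (simp_all add: unity_root_add)

lemma unity_root_mult: "unity_root N (c * t) = unity_root N c ^ t"
  unfolding unity_root_def by (simp add: DeMoivre mult_ac)

lemma norm_unity_root [simp]: "norm (unity_root N n) = 1"
  by (simp add: unity_root_def)

lemma unity_root_multiple: "unity_root N (N * q) = 1"
proof (cases "N = 0")
  case False
  then have "unity_root N N = 1" by (simp add: unity_root_def)
  then show ?thesis by (simp add: unity_root_mult)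
qed (simp add: unity_root_def)

lemma unity_root_mod: "unity_root N (a mod N) = unity_root N a"
  by (metis div_mult_mod_eq mult.commute mult_1 unity_root_add unity_root_multiple)

lemma unity_root_neq_1:
  assumes "0 < c" "c < N"
  shows "unity_root N c \<noteq> 1"
proof
  assume "unity_root N c = 1"
  then obtain j :: int where "2 * pi * real c / real N = 2 * pi * of_int j"
    by (auto simp: unity_root_def complex_eq_iff cos_one_2pi_int)
  then have "int c = int N * j"
    using assms by (simp add: field_simps) (metis of_int_eq_iff of_int_mult of_int_of_nat_eq)
  with assms show False
    by (smt (verit, best) linorder_not_less mult_le_cancel_left1 mult_nonneg_nonpos
        nat_int_comparison(3) of_nat_0_le_iff)
qed

lemma sum_unity_root_mult:
  assumes "c < N"
  shows "(\<Sum>t<N. unity_root N (c * t)) = (if c = 0 then of_nat N else 0)"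
proof (cases "c = 0")
  case False
  have "unity_root N c ^ N = 1"
    by (metis mult.commute unity_root_mult unity_root_multiple)
  then have "(\<Sum>t<N. unity_root N c ^ t) = 0"
    using unity_root_neq_1[of c N] assms False by (subst geometric_sum) auto
  then show ?thesis using False by (simp add: unity_root_mult)
qed (simp add: unity_root_def)

lemma chr_eq_prod_unity_root: "chr N I t w = (\<Prod>j\<in>I. unity_root N (t j * w j))"
proof -
  have "chr N I t w = unity_root N (\<Sum>j\<in>I. t j * w j)"
    unfolding chr_def unity_root_def cis_conv_exp
    by (rule arg_cong[where f = exp]) (simp add: field_simps)
  then show ?thesis by (simp add: unity_root_sum)
qed

lemma norm_chr [simp]: "norm (chr N I t w) = 1"
  by (simp add: chr_eq_prod_unity_root prod_norm[symmetric])

lemma finite_ZN_pow [simp]: "finite I \<Longrightarrow> finite (ZN_pow N I)"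
  unfolding ZN_pow_def by (rule finite_PiE) auto

lemma card_ZN_pow: "finite I \<Longrightarrow> card (ZN_pow N I) = N ^ card I"
  unfolding ZN_pow_def by (simp add: card_funcsetE)

lemma vsub_in_ZN_pow: "N > 0 \<Longrightarrow> vsub N k w z \<in> ZN_pow N {..<k}"
  by (auto simp: vsub_def ZN_pow_def)

lemma mod_sub_add_cancel:
  fixes w N z :: nat
  assumes "w < N" "z \<le> N"
  shows "((w + N - z) mod N + z) mod N = w"
proof -
  have "((w + N - z) mod N + z) mod N = (w + N - z + z) mod N"
    by (rule mod_add_left_eq)
  also have "w + N - z + z = w + N"
    using assms(2) by simp
  finally show ?thesis
    using assms(1) by simp
qed

lemma bij_betw_vsub:
  assumes "N > 0" and z: "z \<in> ZN_pow N {..<k}"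
  shows "bij_betw (\<lambda>w. vsub N k w z) (ZN_pow N {..<k}) (ZN_pow N {..<k})"
proof -
  have "inj_on (\<lambda>w. vsub N k w z) (ZN_pow N {..<k})"
  proof (rule inj_onI)
    fix w w' assume w: "w \<in> ZN_pow N {..<k}" and w': "w' \<in> ZN_pow N {..<k}"
      and eq: "vsub N k w z = vsub N k w' z"
    show "w = w'"
    proof (rule PiE_ext[OF w[unfolded ZN_pow_def] w'[unfolded ZN_pow_def]])
      fix i assume i: "i \<in> {..<k}"
      then have "w i < N" "w' i < N" "z i < N"
        using w w' z by (auto simp: ZN_pow_def)
      moreover have "(w i + N - z i) mod N = (w' i + N - z i) mod N"
        using fun_cong[OF eq, of i] i by (simp add: vsub_def)
      ultimately show "w i = w' i"
        by (metis mod_sub_add_cancel less_imp_le)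
    qed
  qed
  moreover have "(\<lambda>w. vsub N k w z) ` ZN_pow N {..<k} \<subseteq> ZN_pow N {..<k}"
    using vsub_in_ZN_pow[OF \<open>N > 0\<close>] by blast
  ultimately show ?thesis
    by (metis bij_betw_def endo_inj_surj finite_ZN_pow finite_lessThan)
qed

lemma chr_vsub:
  assumes "z \<in> ZN_pow N {..<k}"
  shows "chr N {..<k} t w = chr N {..<k} t (vsub N k w z) * chr N {..<k} t z"
proof -
  have "unity_root N (t j * w j) = unity_root N (t j * vsub N k w z j) * unity_root N (t j * z j)"
    if "j < k" for j
  proof -
    have "z j < N" using assms that by (auto simp: ZN_pow_def)
    then have "unity_root N (vsub N k w z j) * unity_root N (z j) = unity_root N (w j + N * 1)"
      using that by (simp add: vsub_def unity_root_mod flip: unity_root_add)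
    also have "\<dots> = unity_root N (w j)"
      by (simp only: unity_root_add unity_root_multiple) simp
    finally show ?thesis
      by (simp add: mult.commute[of "t j"] unity_root_mult flip: power_mult_distrib)
  qed
  then show ?thesis
    unfolding chr_eq_prod_unity_root prod.distrib[symmetric] by (intro prod.cong) auto
qed

definition pmf_fourier ::
    "nat \<Rightarrow> nat \<Rightarrow> ((nat \<Rightarrow> nat) \<Rightarrow> real) \<Rightarrow> (nat \<Rightarrow> nat) \<Rightarrow> complex" where
  "pmf_fourier N k \<mu> t = (\<Sum>u\<in>ZN_pow N {..<k}. of_real (\<mu> u) * cnj (chr N {..<k} t u))"

lemma sum_translated_pmf_chr:
  assumes "N > 0" and z: "z \<in> ZN_pow N {..<k}"
  shows "(\<Sum>w\<in>ZN_pow N {..<k}. of_real (\<mu> (vsub N k w z)) * cnj (chr N {..<k} t w))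
       = cnj (chr N {..<k} t z) * pmf_fourier N k \<mu> t"
proof -
  have "(\<Sum>w\<in>ZN_pow N {..<k}. of_real (\<mu> (vsub N k w z)) * cnj (chr N {..<k} t w))
      = cnj (chr N {..<k} t z) *
        (\<Sum>w\<in>ZN_pow N {..<k}. of_real (\<mu> (vsub N k w z)) * cnj (chr N {..<k} t (vsub N k w z)))"
    unfolding sum_distrib_left
  proof (intro sum.cong refl)
    fix w
    show "of_real (\<mu> (vsub N k w z)) * cnj (chr N {..<k} t w)
        = cnj (chr N {..<k} t z) * (of_real (\<mu> (vsub N k w z)) * cnj (chr N {..<k} t (vsub N k w z)))"
      using chr_vsub[OF z, of t w] by (simp add: mult_ac)
  qed
  also have "(\<Sum>w\<in>ZN_pow N {..<k}. of_real (\<mu> (vsub N k w z)) * cnj (chr N {..<k} t (vsub N k w z)))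
      = pmf_fourier N k \<mu> t"
    unfolding pmf_fourier_def by (rule sum.reindex_bij_betw[OF bij_betw_vsub[OF assms]])
  finally show ?thesis .
qed

lemma norm_pmf_fourier_le_1:
  assumes "pmf_on N k \<mu>"
  shows "norm (pmf_fourier N k \<mu> t) \<le> 1"
proof -
  have "norm (pmf_fourier N k \<mu> t) \<le> (\<Sum>u\<in>ZN_pow N {..<k}. norm (of_real (\<mu> u) * cnj (chr N {..<k} t u)))"
    unfolding pmf_fourier_def by (rule norm_sum)
  also have "\<dots> = (\<Sum>u\<in>ZN_pow N {..<k}. \<mu> u)"
    using assms by (intro sum.cong refl) (auto simp: pmf_on_def norm_mult)
  finally show ?thesis
    using assms by (simp add: pmf_on_def)
qed

lemma pmf_fourier_weight_one:
  assumes "one_wise_independent N k \<mu>" and t: "t \<in> ZN_pow N {..<k}"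
    and "card {i\<in>{..<k}. t i \<noteq> 0} = 1"
  shows "pmf_fourier N k \<mu> t = 0"
proof -
  obtain i where i: "{j\<in>{..<k}. t j \<noteq> 0} = {i}"
    using assms(3) by (rule card_1_singletonE)
  then have "i < k" "t i \<noteq> 0"
    by blast+
  have other_zero: "t j = 0" if "j < k" "j \<noteq> i" for j
    using i that by blast
  have "t i < N"
    using PiE_mem[OF t[unfolded ZN_pow_def], of i] \<open>i < k\<close> by simp
  have chr_eq: "chr N {..<k} t u = unity_root N (t i * u i)" for u
  proof -
    have "chr N {..<k} t u = unity_root N (t i * u i) * (\<Prod>j\<in>{..<k} - {i}. unity_root N (t j * u j))"
      unfolding chr_eq_prod_unity_root using \<open>i < k\<close> by (intro prod.remove) auto
    also have "(\<Prod>j\<in>{..<k} - {i}. unity_root N (t j * u j)) = 1"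
      using other_zero by (intro prod.neutral) simp
    finally show ?thesis
      by simp
  qed
  have "pmf_fourier N k \<mu> t
      = (\<Sum>s<N. \<Sum>u\<in>{u\<in>ZN_pow N {..<k}. u i = s}. of_real (\<mu> u) * cnj (unity_root N (t i * u i)))"
    unfolding pmf_fourier_def chr_eq
    by (rule sum.group[symmetric]) (use \<open>i < k\<close> in \<open>auto simp: ZN_pow_def intro: finite_PiE\<close>)
  also have "\<dots> = (\<Sum>s<N. of_real (\<Sum>u\<in>{u\<in>ZN_pow N {..<k}. u i = s}. \<mu> u) * cnj (unity_root N (t i * s)))"
    by (intro sum.cong refl) (auto simp: sum_distrib_right)
  also have "\<dots> = (\<Sum>s<N. of_real (1 / real N) * cnj (unity_root N (t i * s)))"
    using assms(1) \<open>i < k\<close> by (intro sum.cong refl) (simp add: one_wise_independent_def)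
  also have "\<dots> = of_real (1 / real N) * cnj (\<Sum>s<N. unity_root N (t i * s))"
    by (simp add: sum_distrib_left)
  also have "(\<Sum>s<N. unity_root N (t i * s)) = 0"
    using \<open>t i \<noteq> 0\<close> \<open>t i < N\<close> by (simp add: sum_unity_root_mult)
  finally show ?thesis by simp
qed

lemma card_maps: "finite M \<Longrightarrow> card (maps N k M) = N ^ (k * card M)"
  by (simp add: maps_def card_PiE card_ZN_pow power_mult mult.commute)

locale tuple_matching =
  fixes k :: nat and \<Lambda> :: "'v set" and M :: "(nat \<Rightarrow> 'v) set"
  assumes finite_vertices: "finite \<Lambda>"
    and finite_edges: "finite M"
    and inj_edge: "e \<in> M \<Longrightarrow> inj_on e {..<k}"
    and disjoint_edges: "e \<in> M \<Longrightarrow> e' \<in> M \<Longrightarrow> e \<noteq> e' \<Longrightarrow> e ` {..<k} \<inter> e' ` {..<k} = {}"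
    and edge_vertex: "e \<in> M \<Longrightarrow> i < k \<Longrightarrow> e i \<in> \<Lambda>"
begin

definition uncovered :: "'v set" where
  "uncovered = \<Lambda> - (\<Union>e\<in>M. e ` {..<k})"

lemma finite_uncovered [simp]: "finite uncovered"
  using finite_vertices by (simp add: uncovered_def)

lemma vertex_cases:
  assumes "v \<in> \<Lambda>"
  obtains "v \<in> uncovered" | e i where "e \<in> M" "i < k" "v = e i"
  using assms unfolding uncovered_def by blast

lemma edge_position_unique:
  assumes "e \<in> M" "e' \<in> M" "i < k" "i' < k" "e' i' = e i"
  shows "e' = e \<and> i' = i"
proof -
  have "e' = e"
    using disjoint_edges[OF assms(2,1)] assms(3-5) by blast
  with inj_edge[OF assms(1)] assms(3-5) show ?thesis
    by (auto simp: inj_on_def)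
qed

lemma bracket_edge:
  assumes "e \<in> M" "i < k"
  shows "bracket k \<Lambda> M a (e i) = a e i"
proof -
  have "(THE c. \<exists>e'\<in>M. \<exists>i'<k. e' i' = e i \<and> a e' i' = c) = a e i"
    using assms edge_position_unique[OF assms(1) _ assms(2)] by (intro the_equality) blast+
  then show ?thesis
    using assms edge_vertex by (auto simp: bracket_def)
qed

lemma bracket_uncovered: "v \<in> uncovered \<Longrightarrow> bracket k \<Lambda> M a v = 0"
  by (auto simp: bracket_def uncovered_def)

lemma restr_tuple_bracket:
  assumes "a \<in> maps N k M" "e \<in> M"
  shows "restr_tuple k (bracket k \<Lambda> M a) e = a e"
proof -
  have "a e \<in> {..<k} \<rightarrow>\<^sub>E {..<N}"
    using assms by (auto simp: maps_def ZN_pow_def)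
  then show ?thesis
    unfolding restr_tuple_def using assms(2) by (simp add: bracket_edge cong: restrict_cong)
qed

lemma restr_tuples_in_maps:
  assumes x: "x \<in> ZN_pow N \<Lambda>"
  shows "(\<lambda>e\<in>M. restr_tuple k x e) \<in> maps N k M"
proof -
  have "x (e i) < N" if "e \<in> M" "i < k" for e i
    using PiE_mem[OF x[unfolded ZN_pow_def] edge_vertex[OF that]] by simp
  then show ?thesis
    by (simp add: maps_def ZN_pow_def restr_tuple_def restrict_PiE_iff)
qed

lemma bracket_in_ZN_pow:
  assumes "N > 0" and a: "a \<in> maps N k M"
  shows "bracket k \<Lambda> M a \<in> ZN_pow N \<Lambda>"
proof -
  have "bracket k \<Lambda> M a v < N" if "v \<in> \<Lambda>" for v
    using that
  proof (cases rule: vertex_cases)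
    case 1
    then show ?thesis
      using assms(1) by (simp add: bracket_uncovered)
  next
    case (2 e i)
    then have "a e \<in> {..<k} \<rightarrow>\<^sub>E {..<N}"
      using PiE_mem[OF a[unfolded maps_def]] by (simp add: ZN_pow_def)
    then show ?thesis
      using 2 by (auto simp: bracket_edge)
  qed
  then show ?thesis
    unfolding ZN_pow_def PiE_iff by (simp add: bracket_def)
qed

lemma bracket_restr_tuples:
  assumes b: "b \<in> ZN_pow N \<Lambda>" and "\<forall>v\<in>uncovered. b v = 0"
  shows "bracket k \<Lambda> M (\<lambda>e\<in>M. restr_tuple k b e) = b"
proof
  fix v
  show "bracket k \<Lambda> M (\<lambda>e\<in>M. restr_tuple k b e) v = b v"
  proof (cases "v \<in> \<Lambda>")
    case True
    then show ?thesis
    proof (cases rule: vertex_cases)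
      case 1
      then show ?thesis
        using assms(2) by (simp add: bracket_uncovered)
    next
      case (2 e i)
      then show ?thesis
        using bracket_edge[OF 2(1,2), of "\<lambda>e\<in>M. restr_tuple k b e"] by (simp add: restr_tuple_def)
    qed
  next
    case False
    then show ?thesis
      using PiE_arb[OF b[unfolded ZN_pow_def] False] by (simp add: bracket_def)
  qed
qed

lemma sum_vertices_split:
  "(\<Sum>v\<in>\<Lambda>. \<phi> v) = (\<Sum>e\<in>M. \<Sum>i<k. \<phi> (e i)) + (\<Sum>v\<in>uncovered. \<phi> v)"
proof -
  let ?V = "\<Union>e\<in>M. e ` {..<k}"
  have "?V \<subseteq> \<Lambda>"
    using edge_vertex by auto
  then have "(\<Sum>v\<in>\<Lambda>. \<phi> v) = (\<Sum>v\<in>uncovered. \<phi> v) + (\<Sum>v\<in>?V. \<phi> v)"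
    unfolding uncovered_def using finite_vertices by (rule sum.subset_diff)
  also have "(\<Sum>v\<in>?V. \<phi> v) = (\<Sum>e\<in>M. \<Sum>v\<in>e ` {..<k}. \<phi> v)"
    using finite_edges disjoint_edges by (intro sum.UNION_disjoint) auto
  also have "\<dots> = (\<Sum>e\<in>M. \<Sum>i<k. \<phi> (e i))"
    using inj_edge by (intro sum.cong refl) (simp add: sum.reindex)
  finally show ?thesis
    by (simp add: add.commute)
qed

lemma card_vertices: "card \<Lambda> = k * card M + card uncovered"
  using sum_vertices_split[of "\<lambda>_. 1 :: nat"] by (simp add: mult.commute)

lemma chr_split:
  "chr N \<Lambda> b x = (\<Prod>e\<in>M. chr N {..<k} (restr_tuple k b e) (restr_tuple k x e))
                  * (\<Prod>v\<in>uncovered. unity_root N (b v * x v))"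
proof -
  have "chr N \<Lambda> b x = unity_root N (\<Sum>v\<in>\<Lambda>. b v * x v)"
    by (simp add: chr_eq_prod_unity_root unity_root_sum)
  also have "\<dots> = (\<Prod>e\<in>M. \<Prod>i<k. unity_root N (b (e i) * x (e i)))
                  * (\<Prod>v\<in>uncovered. unity_root N (b v * x v))"
    by (simp only: sum_vertices_split unity_root_add unity_root_sum)
  also have "(\<Prod>e\<in>M. \<Prod>i<k. unity_root N (b (e i) * x (e i)))
           = (\<Prod>e\<in>M. chr N {..<k} (restr_tuple k b e) (restr_tuple k x e))"
    by (simp add: chr_eq_prod_unity_root restr_tuple_def)
  finally show ?thesis .
qed

lemma card_ZN_pow_vertices: "card (ZN_pow N \<Lambda>) = card (maps N k M) * N ^ card uncovered"
  using finite_vertices finite_edges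
  by (simp add: card_ZN_pow card_maps card_vertices power_add)

lemma bij_betw_coordinates:
  "bij_betw (\<lambda>x. (\<lambda>e\<in>M. restr_tuple k x e, restrict x uncovered))
     (ZN_pow N \<Lambda>) (maps N k M \<times> ZN_pow N uncovered)"
proof -
  let ?coord = "\<lambda>x. (\<lambda>e\<in>M. restr_tuple k x e, restrict x uncovered)"
  have inj: "inj_on ?coord (ZN_pow N \<Lambda>)"
  proof (rule inj_onI)
    fix x y assume x: "x \<in> ZN_pow N \<Lambda>" and y: "y \<in> ZN_pow N \<Lambda>" and "?coord x = ?coord y"
    then have edges_eq: "(\<lambda>e\<in>M. restr_tuple k x e) = (\<lambda>e\<in>M. restr_tuple k y e)"
      and uncovered_eq: "restrict x uncovered = restrict y uncovered"
      by simp_all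
    show "x = y"
    proof (rule PiE_ext[OF x[unfolded ZN_pow_def] y[unfolded ZN_pow_def]])
      fix v assume "v \<in> \<Lambda>"
      then show "x v = y v"
      proof (cases rule: vertex_cases)
        case 1
        then show ?thesis
          using fun_cong[OF uncovered_eq, of v] by simp
      next
        case (2 e i)
        then have "restr_tuple k x e i = restr_tuple k y e i"
          using fun_cong[OF edges_eq, of e] by simp
        then show ?thesis
          using 2 by (simp add: restr_tuple_def)
      qed
    qed
  qed
  have sub: "?coord ` ZN_pow N \<Lambda> \<subseteq> maps N k M \<times> ZN_pow N uncovered"
  proof
    fix p assume "p \<in> ?coord ` ZN_pow N \<Lambda>"
    then obtain x where x: "x \<in> ZN_pow N \<Lambda>" and p: "p = ?coord x"
      by blast
    have "x v < N" if "v \<in> uncovered" for v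
      using that PiE_mem[OF x[unfolded ZN_pow_def]] by (auto simp: uncovered_def)
    then have "restrict x uncovered \<in> ZN_pow N uncovered"
      by (simp add: ZN_pow_def restrict_PiE_iff)
    with restr_tuples_in_maps[OF x] show "p \<in> maps N k M \<times> ZN_pow N uncovered"
      by (simp add: p)
  qed
  have "card (ZN_pow N \<Lambda>) = card (maps N k M \<times> ZN_pow N uncovered)"
    by (simp add: card_ZN_pow_vertices card_cartesian_product card_ZN_pow)
  then have "card (?coord ` ZN_pow N \<Lambda>) = card (maps N k M \<times> ZN_pow N uncovered)"
    using card_image[OF inj] by simp
  moreover have "finite (maps N k M \<times> ZN_pow N uncovered)"
    using finite_edges by (simp add: maps_def finite_PiE)
  ultimately have "?coord ` ZN_pow N \<Lambda> = maps N k M \<times> ZN_pow N uncovered"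
    using card_subset_eq[OF _ sub] by blast
  with inj show ?thesis
    by (simp add: bij_betw_def)
qed

lemma sum_weight_chr:
  assumes "N > 0" and \<xi>: "\<xi> \<in> maps N k M"
  shows "(\<Sum>x\<in>ZN_pow N \<Lambda>. of_real (\<Prod>e\<in>M. \<mu> (vsub N k (restr_tuple k x e) (\<xi> e))) * cnj (chr N \<Lambda> b x))
       = cnj (psi N k M (\<lambda>e\<in>M. restr_tuple k b e) \<xi>) * (\<Prod>e\<in>M. pmf_fourier N k \<mu> (restr_tuple k b e))
         * (\<Prod>v\<in>uncovered. \<Sum>t<N. cnj (unity_root N (b v * t)))"
proof -
  define g where "g e w = of_real (\<mu> (vsub N k w (\<xi> e))) * cnj (chr N {..<k} (restr_tuple k b e) w)"
    for e w
  define h where "h v t = cnj (unity_root N (b v * t))" for v t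
  have "(\<Sum>x\<in>ZN_pow N \<Lambda>. of_real (\<Prod>e\<in>M. \<mu> (vsub N k (restr_tuple k x e) (\<xi> e))) * cnj (chr N \<Lambda> b x))
      = (\<Sum>x\<in>ZN_pow N \<Lambda>. (\<lambda>(\<eta>, z). (\<Prod>e\<in>M. g e (\<eta> e)) * (\<Prod>v\<in>uncovered. h v (z v)))
                             (\<lambda>e\<in>M. restr_tuple k x e, restrict x uncovered))"
    by (intro sum.cong refl) (simp add: chr_split g_def h_def prod.distrib mult_ac)
  also have "\<dots> = (\<Sum>(\<eta>, z)\<in>maps N k M \<times> ZN_pow N uncovered. (\<Prod>e\<in>M. g e (\<eta> e)) * (\<Prod>v\<in>uncovered. h v (z v)))"
    by (rule sum.reindex_bij_betw[OF bij_betw_coordinates])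
  also have "\<dots> = (\<Sum>\<eta>\<in>maps N k M. \<Prod>e\<in>M. g e (\<eta> e)) * (\<Sum>z\<in>ZN_pow N uncovered. \<Prod>v\<in>uncovered. h v (z v))"
    by (simp add: sum_product sum.cartesian_product)
  also have "\<dots> = (\<Prod>e\<in>M. \<Sum>w\<in>ZN_pow N {..<k}. g e w) * (\<Prod>v\<in>uncovered. \<Sum>t<N. h v t)"
    using finite_edges by (simp add: maps_def ZN_pow_def prod_sum_PiE finite_PiE)
  also have "(\<Prod>e\<in>M. \<Sum>w\<in>ZN_pow N {..<k}. g e w)
      = (\<Prod>e\<in>M. cnj (chr N {..<k} (restr_tuple k b e) (\<xi> e)) * pmf_fourier N k \<mu> (restr_tuple k b e))"
  proof (intro prod.cong refl)
    fix e assume "e \<in> M"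
    then have "\<xi> e \<in> ZN_pow N {..<k}"
      using PiE_mem[OF \<xi>[unfolded maps_def]] by simp
    then show "(\<Sum>w\<in>ZN_pow N {..<k}. g e w)
        = cnj (chr N {..<k} (restr_tuple k b e) (\<xi> e)) * pmf_fourier N k \<mu> (restr_tuple k b e)"
      unfolding g_def by (rule sum_translated_pmf_chr[OF \<open>N > 0\<close>])
  qed
  finally show ?thesis
    by (simp add: psi_def prod.distrib h_def)
qed

lemma prod_uncovered_char_sums:
  assumes b: "b \<in> ZN_pow N \<Lambda>"
  shows "(\<Prod>v\<in>uncovered. \<Sum>t<N. cnj (unity_root N (b v * t)))
       = (if \<forall>v\<in>uncovered. b v = 0 then 1 else 0) * of_nat N ^ card uncovered"
proof -
  have "b v < N" if "v \<in> uncovered" for v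
    using that PiE_mem[OF b[unfolded ZN_pow_def]] by (auto simp: uncovered_def)
  then have "(\<Prod>v\<in>uncovered. \<Sum>t<N. cnj (unity_root N (b v * t)))
           = (\<Prod>v\<in>uncovered. if b v = 0 then of_nat N else 0)"
    by (intro prod.cong refl) (simp add: sum_unity_root_mult flip: cnj_sum)
  also have "\<dots> = (if \<forall>v\<in>uncovered. b v = 0 then 1 else 0) * of_nat N ^ card uncovered"
  proof (cases "\<forall>v\<in>uncovered. b v = 0")
    case False
    then obtain v where "v \<in> uncovered" "b v \<noteq> 0"
      by blast
    then have "(\<Prod>v\<in>uncovered. if b v = 0 then of_nat N else 0) = (0 :: complex)"
      by (intro prod_zero finite_uncovered bexI[where x = v]) simp_all
    then show ?thesis
      using False by simp
  qed simp
  finally show ?thesis .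
qed

lemma inner_Rop_chr:
  assumes "N > 0" and b: "b \<in> ZN_pow N \<Lambda>"
  shows "inner_exp (ZN_pow N \<Lambda>) (Rop N k \<mu> M f) (chr N \<Lambda> b)
       = (if \<forall>v\<in>uncovered. b v = 0 then 1 else 0) * (\<Prod>e\<in>M. pmf_fourier N k \<mu> (restr_tuple k b e))
         * fourier N k M f (\<lambda>e\<in>M. restr_tuple k b e)"
proof -
  define \<beta> where "\<beta> = (\<lambda>e\<in>M. restr_tuple k b e)"
  define P where "P = (\<Prod>e\<in>M. pmf_fourier N k \<mu> (restr_tuple k b e))"
  define Z :: complex where "Z = (if \<forall>v\<in>uncovered. b v = 0 then 1 else 0)"
  note uncovered_factor = prod_uncovered_char_sums[OF b, folded Z_def]
  have "(\<Sum>x\<in>ZN_pow N \<Lambda>. Rop N k \<mu> M f x * cnj (chr N \<Lambda> b x))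
      = (\<Sum>\<xi>\<in>maps N k M. f \<xi> * (\<Sum>x\<in>ZN_pow N \<Lambda>.
            of_real (\<Prod>e\<in>M. \<mu> (vsub N k (restr_tuple k x e) (\<xi> e))) * cnj (chr N \<Lambda> b x)))"
    unfolding Rop_def sum_distrib_right sum_distrib_left by (subst sum.swap) (simp add: mult_ac)
  also have "\<dots> = (\<Sum>\<xi>\<in>maps N k M. f \<xi> * (cnj (psi N k M \<beta> \<xi>) * P * (Z * of_nat N ^ card uncovered)))"
  proof (intro sum.cong refl)
    fix \<xi> assume "\<xi> \<in> maps N k M"
    show "f \<xi> * (\<Sum>x\<in>ZN_pow N \<Lambda>. of_real (\<Prod>e\<in>M. \<mu> (vsub N k (restr_tuple k x e) (\<xi> e))) * cnj (chr N \<Lambda> b x))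
        = f \<xi> * (cnj (psi N k M \<beta> \<xi>) * P * (Z * of_nat N ^ card uncovered))"
      by (simp only: sum_weight_chr[OF \<open>N > 0\<close> \<open>\<xi> \<in> maps N k M\<close>] uncovered_factor
          flip: \<beta>_def P_def)
  qed
  also have "\<dots> = (\<Sum>\<xi>\<in>maps N k M. f \<xi> * cnj (psi N k M \<beta> \<xi>)) * P * Z * of_nat N ^ card uncovered"
    unfolding sum_distrib_right by (simp add: mult_ac)
  also have "(\<Sum>\<xi>\<in>maps N k M. f \<xi> * cnj (psi N k M \<beta> \<xi>)) = of_nat (card (maps N k M)) * fourier N k M f \<beta>"
    using \<open>N > 0\<close> finite_edges by (simp add: fourier_def inner_exp_def card_maps)
  finally show ?thesis
    using \<open>N > 0\<close> finite_edges
    by (simp add: inner_exp_def card_ZN_pow_vertices card_maps \<beta>_def P_def Z_def)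
qed

lemma norm_inner_Rop_chr_bracket_le:
  assumes "N > 0" and "pmf_on N k \<mu>" and a: "a \<in> maps N k M"
  shows "norm (inner_exp (ZN_pow N \<Lambda>) (Rop N k \<mu> M f) (chr N \<Lambda> (bracket k \<Lambda> M a)))
       \<le> norm (fourier N k M f a)"
proof -
  have "(\<lambda>e\<in>M. restr_tuple k (bracket k \<Lambda> M a) e) = a"
    using a unfolding maps_def by (simp add: restr_tuple_bracket[OF a] cong: restrict_cong)
  moreover have "norm (\<Prod>e\<in>M. pmf_fourier N k \<mu> (restr_tuple k (bracket k \<Lambda> M a) e)) \<le> 1"
    unfolding prod_norm[symmetric] using norm_pmf_fourier_le_1[OF assms(2)]
    by (intro prod_le_1) simp
  ultimately show ?thesis
    using inner_Rop_chr[OF assms(1) bracket_in_ZN_pow[OF assms(1) a]]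
    by (simp add: bracket_uncovered norm_mult mult_left_le_one_le)
qed

lemma inner_Rop_chr_eq_0:
  assumes "N > 0" and "one_wise_independent N k \<mu>" and b: "b \<in> ZN_pow N \<Lambda>"
    and no_bracket: "\<forall>a\<in>Xset N k M. b \<noteq> bracket k \<Lambda> M a"
  shows "inner_exp (ZN_pow N \<Lambda>) (Rop N k \<mu> M f) (chr N \<Lambda> b) = 0"
proof (cases "\<forall>v\<in>uncovered. b v = 0")
  case True
  let ?a = "\<lambda>e\<in>M. restr_tuple k b e"
  have a: "?a \<in> maps N k M"
    using restr_tuples_in_maps[OF b] .
  moreover have "?a \<notin> Xset N k M"
    using no_bracket bracket_restr_tuples[OF b True] by metis
  ultimately obtain e where e: "e \<in> M" and "card {i\<in>{..<k}. ?a e i \<noteq> 0} = 1"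
    by (auto simp: Xset_def)
  moreover have "?a e \<in> ZN_pow N {..<k}"
    using PiE_mem[OF a[unfolded maps_def] e] .
  ultimately have "pmf_fourier N k \<mu> (restr_tuple k b e) = 0"
    using pmf_fourier_weight_one[OF assms(2)] by simp
  then have "(\<Prod>e\<in>M. pmf_fourier N k \<mu> (restr_tuple k b e)) = 0"
    using e by (intro prod_zero finite_edges bexI[where x = e])
  then show ?thesis
    by (simp add: inner_Rop_chr[OF assms(1) b])
next
  case False
  then have "(if \<forall>v\<in>uncovered. b v = 0 then 1 else 0 :: complex) = 0"
    by (rule if_not_P)
  then show ?thesis
    by (simp add: inner_Rop_chr[OF assms(1) b])
qed

end

theorem lemma6p6:
  fixes N k m n :: nat and U :: "nat \<Rightarrow> 'v set" and \<Lambda> :: "'v set"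
    and \<mu> :: "(nat \<Rightarrow> nat) \<Rightarrow> real" and M :: "(nat \<Rightarrow> 'v) set"
    and f :: "((nat \<Rightarrow> 'v) \<Rightarrow> (nat \<Rightarrow> nat)) \<Rightarrow> complex" and b :: "'v \<Rightarrow> nat"
  assumes "N \<ge> 2"
    and "finite \<Lambda>"
    and "k_universe k U n"
    and "(\<Union>i<k. U i) \<subseteq> \<Lambda>"
    and "pmf_on N k \<mu>"
    and "one_wise_independent N k \<mu>"
    and "M \<in> matchings k U m"
    and "m \<le> n"
    and "b \<in> ZN_pow N \<Lambda>"
  shows "(\<forall>a\<in>Xset N k M. b = bracket k \<Lambda> M a \<longrightarrow>
            cmod (inner_exp (ZN_pow N \<Lambda>) (Rop N k \<mu> M f) (chr N \<Lambda> b)) \<le> cmod (fourier N k M f a))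
       \<and> ((\<forall>a\<in>Xset N k M. b \<noteq> bracket k \<Lambda> M a) \<longrightarrow>
            inner_exp (ZN_pow N \<Lambda>) (Rop N k \<mu> M f) (chr N \<Lambda> b) = 0)"
proof -
  interpret tuple_matching k \<Lambda> M
  proof
    show "e i \<in> \<Lambda>" if "e \<in> M" "i < k" for e i
      using assms(4,7) that by (auto simp: matchings_def)
  qed (use assms(2,7) in \<open>auto simp: matchings_def\<close>)
  have "N > 0"
    using assms(1) by simp
  show ?thesis
  proof (intro conjI ballI impI)
    fix a assume "a \<in> Xset N k M" and "b = bracket k \<Lambda> M a"
    then show "cmod (inner_exp (ZN_pow N \<Lambda>) (Rop N k \<mu> M f) (chr N \<Lambda> b)) \<le> cmod (fourier N k M f a)"
      using norm_inner_Rop_chr_bracket_le[OF \<open>N > 0\<close> assms(5)] by (simp add: Xset_def)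
  next
    assume "\<forall>a\<in>Xset N k M. b \<noteq> bracket k \<Lambda> M a"
    then show "inner_exp (ZN_pow N \<Lambda>) (Rop N k \<mu> M f) (chr N \<Lambda> b) = 0"
      by (rule inner_Rop_chr_eq_0[OF \<open>N > 0\<close> assms(6,9)])
  qed
qed

end
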